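(* For any qubit channel (completely positive trace-preserving map) $\Lambda$ on $2\times2$ density matrices, $$2\le 2\mathcal{F}_c(\Lambda)+D_{C_{l_1}}(\Lambda)\le 3.$$
   Context: Coherence is taken with respect to the computational basis $\{|0\rangle,|1\rangle\}$. $C_{l_1}(\rho)=\sum_{j\ne k}|\langle j|\rho|k\rangle|$. The set of maximally coherent qubit states is $\mathcal{M}=\{\frac{1}{\sqrt2}(e^{\mathfrak{i}\theta_0}|0\rangle+e^{\mathfrak{i}\theta_1}|1\rangle):\theta_0,\theta_1\in[0,2\pi]\}$; the coherence fraction of a state is $F_c(\rho)=\max_{|\phi\rangle\in\mathcal{M}}\langle\phi|\rho|\phi\rangle$. The optimal coherence fraction of $\Lambda$ is $\mathcal{F}_c(\Lambda)=\max_{|\psi\rangle}F_c\big(\Lambda(|\psi\rangle\langle\psi|)\big)$ over all pure qubit states $|\psi\rangle$. The decohering power of $\Lambda$ with respect to $C_{l_1}$ is $D_{C_{l_1}}(\Lambda)=\max_{|\phi\rangle\in\mathcal{M}}\{C_{l_1}(|\phi\rangle\langle\phi|)-C_{l_1}(\Lambda(|\phi\rangle\langle\phi|))\}=1-\min_{|\phi\rangle\in\mathcal{M}}C_{l_1}\big(\Lambda(|\phi\rangle\langle\phi|)\big)$. *)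

theory Defs
  imports "HOL-Analysis.Analysis"
begin

text \<open>Qubit operators: 2x2 complex matrices, rows/columns indexed by the type 2
  (index 1 = basis state 0, index 2 = basis state 1).\<close>

type_synonym qmat = "complex^2^2"
type_synonym qvec = "complex^2"

definition qform :: "qvec \<Rightarrow> qmat \<Rightarrow> complex" where
  "qform v A = (\<Sum>j\<in>UNIV. \<Sum>k\<in>UNIV. cnj (v$j) * A$j$k * v$k)"

definition psd :: "qmat \<Rightarrow> bool" where
  "psd A \<longleftrightarrow> (\<forall>v. Im (qform v A) = 0 \<and> Re (qform v A) \<ge> 0)"

definition density :: "qmat \<Rightarrow> bool" where
  "density A \<longleftrightarrow> psd A \<and> trace A = 1"

definition proj :: "qvec \<Rightarrow> qmat" where
  "proj v = (\<chi> j k. v$j * cnj (v$k))"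

text \<open>Positivity of a block matrix on C^n (x) C^2, given by its n x n array of
  2x2 blocks M i j (i, j < n).\<close>
definition block_psd :: "nat \<Rightarrow> (nat \<Rightarrow> nat \<Rightarrow> qmat) \<Rightarrow> bool" where
  "block_psd n M \<longleftrightarrow>
     (\<forall>v :: nat \<Rightarrow> qvec.
        let q = (\<Sum>i<n. \<Sum>j<n. \<Sum>a\<in>UNIV. \<Sum>b\<in>UNIV. cnj (v i $ a) * M i j $ a $ b * v j $ b)
        in Im q = 0 \<and> Re q \<ge> 0)"

definition qlinear :: "(qmat \<Rightarrow> qmat) \<Rightarrow> bool" where
  "qlinear \<Lambda> \<longleftrightarrow> (\<forall>A B. \<Lambda> (A + B) = \<Lambda> A + \<Lambda> B) \<and> (\<forall>c A. \<Lambda> (c *s A) = c *s \<Lambda> A)"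

definition completely_positive :: "(qmat \<Rightarrow> qmat) \<Rightarrow> bool" where
  "completely_positive \<Lambda> \<longleftrightarrow>
     (\<forall>n M. block_psd n M \<longrightarrow> block_psd n (\<lambda>i j. \<Lambda> (M i j)))"

definition trace_preserving :: "(qmat \<Rightarrow> qmat) \<Rightarrow> bool" where
  "trace_preserving \<Lambda> \<longleftrightarrow> (\<forall>A. trace (\<Lambda> A) = trace A)"

definition qubit_channel :: "(qmat \<Rightarrow> qmat) \<Rightarrow> bool" where
  "qubit_channel \<Lambda> \<longleftrightarrow> qlinear \<Lambda> \<and> completely_positive \<Lambda> \<and> trace_preserving \<Lambda>"

definition C_l1 :: "qmat \<Rightarrow> real" where
  "C_l1 \<rho> = (\<Sum>j\<in>UNIV. \<Sum>k\<in>(UNIV - {j}). norm (\<rho>$j$k))"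

definition mcs :: "real \<Rightarrow> real \<Rightarrow> qvec" where
  "mcs \<theta>0 \<theta>1 = vector [exp (\<i> * of_real \<theta>0) / of_real (sqrt 2),
                          exp (\<i> * of_real \<theta>1) / of_real (sqrt 2)]"

definition max_coh :: "qvec set" where
  "max_coh = {mcs \<theta>0 \<theta>1 | \<theta>0 \<theta>1. \<theta>0 \<in> {0..2*pi} \<and> \<theta>1 \<in> {0..2*pi}}"

definition coh_fraction :: "qmat \<Rightarrow> real" where
  "coh_fraction \<rho> = Sup ((\<lambda>\<phi>. Re (qform \<phi> \<rho>)) ` max_coh)"

definition pure_states :: "qvec set" where
  "pure_states = {\<psi>. norm \<psi> = 1}"

definition opt_coh_fraction :: "(qmat \<Rightarrow> qmat) \<Rightarrow> real" where
  "opt_coh_fraction \<Lambda> = Sup ((\<lambda>\<psi>. coh_fraction (\<Lambda> (proj \<psi>))) ` pure_states)"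

definition decohering_power :: "(qmat \<Rightarrow> qmat) \<Rightarrow> real" where
  "decohering_power \<Lambda> = Sup ((\<lambda>\<phi>. C_l1 (proj \<phi>) - C_l1 (\<Lambda> (proj \<phi>))) ` max_coh)"

end

theory Submission
  imports Defs
begin

text \<open>For a density matrix \<rho> with off-diagonal entry z, the maximally coherent state with
  relative phase -Arg z gives \<langle>\<phi>|\<rho>|\<phi>\<rangle> = (1 + C_l1 \<rho>)/2, while antipodal maximally coherent
  states split the trace, so 1 bounds every coherence fraction. Feeding the maximally
  coherent input |+\<rangle> to the channel, the coherence left in its output is counted once with a
  plus sign in 2 F_c and once with a minus sign in D, which gives the lower bound 2; the upper
  bound 3 is just F_c \<le> 1 and D \<le> 1.\<close>

lemma qform_2:
  "qform v A = cnj (v$1) * A$1$1 * v$1 + cnj (v$1) * A$1$2 * v$2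
             + cnj (v$2) * A$2$1 * v$1 + cnj (v$2) * A$2$2 * v$2"
  by (simp add: qform_def sum_2)

lemma trace_2: "trace (A :: qmat) = A$1$1 + A$2$2"
  by (simp add: trace_def sum_2)

lemma C_l1_2: "C_l1 A = norm (A$1$2) + norm (A$2$1)"
proof -
  have "(UNIV :: 2 set) - {1} = {2}" "(UNIV :: 2 set) - {2} = {1}"
    by (auto simp: UNIV_2)
  then show ?thesis
    by (simp add: C_l1_def sum_2)
qed

lemma C_l1_nonneg: "C_l1 A \<ge> 0"
  by (simp add: C_l1_2)

lemma psd_offdiag_cnj:
  assumes "psd A"
  shows "A$2$1 = cnj (A$1$2)"
proof -
  have real: "Im (qform v A) = 0" for v
    using assms psd_def by blast
  from real[of "vector [1, 0]"] real[of "vector [0, 1]"]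
       real[of "vector [1, 1]"] real[of "vector [1, \<i>]"]
  show ?thesis
    by (simp add: qform_2 algebra_simps complex_eq_iff)
qed

lemma psd_proj: "psd (proj \<psi>)"
proof -
  have "qform v (proj \<psi>) = (cnj (v$1) * \<psi>$1 + cnj (v$2) * \<psi>$2) * cnj (cnj (v$1) * \<psi>$1 + cnj (v$2) * \<psi>$2)"
    for v
    by (simp add: qform_2 proj_def algebra_simps)
  then show ?thesis
    unfolding psd_def by (metis Im_complex_of_real Re_complex_of_real complex_norm_square zero_le_power2)
qed

lemma density_proj:
  assumes "norm \<psi> = 1"
  shows "density (proj \<psi>)"
proof -
  have "(norm (\<psi>$1))\<^sup>2 + (norm (\<psi>$2))\<^sup>2 = 1"
    using assms by (simp add: norm_vec_def L2_set_def sum_2)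
  moreover have "\<psi>$j * cnj (\<psi>$j) = complex_of_real ((norm (\<psi>$j))\<^sup>2)" for j
    by (simp add: complex_norm_square[symmetric])
  ultimately have "\<psi>$1 * cnj (\<psi>$1) + \<psi>$2 * cnj (\<psi>$2) = 1"
    by (metis of_real_1 of_real_add)
  then have "trace (proj \<psi>) = 1"
    by (simp add: trace_2 proj_def)
  then show ?thesis
    by (simp add: density_def psd_proj)
qed

lemma completely_positive_psd:
  assumes "completely_positive \<Lambda>" "psd A"
  shows "psd (\<Lambda> A)"
proof -
  have "block_psd 1 (\<lambda>_ _. A)"
    using assms(2) unfolding block_psd_def psd_def qform_def Let_def by simp
  then have image_psd: "block_psd 1 (\<lambda>_ _. \<Lambda> A)"
    using assms(1) completely_positive_def by blast
  have "Im (qform w (\<Lambda> A)) = 0 \<and> Re (qform w (\<Lambda> A)) \<ge> 0" for w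
    using image_psd[unfolded block_psd_def Let_def, rule_format, of "\<lambda>_. w"]
    by (simp add: qform_def)
  then show ?thesis
    by (simp add: psd_def)
qed

lemma qubit_channel_density:
  assumes "qubit_channel \<Lambda>" "density A"
  shows "density (\<Lambda> A)"
  using assms completely_positive_psd
  unfolding qubit_channel_def trace_preserving_def density_def by auto

lemma mcs_components:
  "mcs a b $ 1 = cis a / sqrt 2" "mcs a b $ 2 = cis b / sqrt 2"
  by (simp_all add: mcs_def cis_conv_exp)

lemma norm_mcs: "norm (mcs a b) = 1"
  by (simp add: norm_vec_def L2_set_def sum_2 mcs_components norm_divide power_divide)

lemma mcs_in_max_coh: "a \<in> {0..2*pi} \<Longrightarrow> b \<in> {0..2*pi} \<Longrightarrow> mcs a b \<in> max_coh"
  unfolding max_coh_def by blast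

lemma max_coh_obtain_mcs:
  assumes "\<phi> \<in> max_coh"
  obtains a b where "\<phi> = mcs a b"
  using assms unfolding max_coh_def by blast

lemma C_l1_proj_mcs: "C_l1 (proj (mcs a b)) = 1"
proof -
  have "norm (cis a * cnj (cis b) / (complex_of_real (sqrt 2) * sqrt 2)) = 1/2" for a b
    by (simp add: norm_divide norm_mult)
  from this[of a b] this[of b a] show ?thesis
    by (simp add: C_l1_2 proj_def mcs_components)
qed

lemma qform_mcs:
  "qform (mcs a b) A = (A$1$1 + A$2$2) / 2 + cis (b - a) * A$1$2 / 2 + cis (a - b) * A$2$1 / 2"
proof -
  define r where "r = complex_of_real (sqrt 2)"
  have r: "r \<noteq> 0" "cnj r = r" "r * r = 2"
    by (simp_all add: r_def flip: of_real_mult)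
  have phase: "cnj (cis x) * cis y = cis (y - x)" "cnj (cis x) * cis x = 1" for x y
    by (simp_all add: cis_cnj cis_mult)
  have "qform (mcs a b) A = (cnj (cis a) * cis a * A$1$1 + cnj (cis a) * cis b * A$1$2
      + cnj (cis b) * cis a * A$2$1 + cnj (cis b) * cis b * A$2$2) / (r * r)"
    unfolding qform_2 mcs_components r_def[symmetric] using r(1,2)
    by (simp add: divide_simps)
  then show ?thesis
    unfolding phase r(3) by (simp add: field_simps)
qed

lemma qform_mcs_antipodal: "qform (mcs a b) A + qform (mcs (a + pi) b) A = trace A"
proof -
  have "cis (x + pi) = - cis x" for x
    by (simp add: complex_eq_iff)
  from this[of "b - (a + pi)"] this[of "a - b"]
  have "cis (b - (a + pi)) = - cis (b - a)" "cis (a + pi - b) = - cis (a - b)"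
    by (simp_all add: algebra_simps)
  then show ?thesis
    by (simp add: qform_mcs trace_2 field_simps)
qed

lemma density_qform_mcs_le_1:
  assumes "density A"
  shows "Re (qform (mcs a b) A) \<le> 1"
proof -
  have "Re (qform (mcs a b) A) + Re (qform (mcs (a + pi) b) A) = 1"
    using assms qform_mcs_antipodal[of a b A] by (simp add: density_def flip: plus_complex.sel)
  moreover have "Re (qform (mcs (a + pi) b) A) \<ge> 0"
    using assms by (simp add: density_def psd_def)
  ultimately show ?thesis
    by linarith
qed

text \<open>The first angle is \<pi> rather than 0 so that both angles lie in [0, 2\<pi>].\<close>

lemma density_qform_mcs_aligned:
  assumes "density A"
  shows "Re (qform (mcs pi (pi - Arg (A$1$2))) A) = 1/2 + C_l1 A / 2"
proof -
  define z where "z = A$1$2"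
  have z_polar: "z = cmod z * cis (Arg z)"
    using rcis_cmod_Arg[of z] by (simp add: rcis_def)
  have "cis (- Arg z) * z = cmod z"
    by (subst z_polar) (simp add: cis_mult mult.left_commute)
  moreover from arg_cong[OF this, of cnj] have "cis (Arg z) * cnj z = cmod z"
    by (simp add: cis_cnj)
  moreover have "A$2$1 = cnj z" "Re (A$1$1 + A$2$2) = 1"
    using assms psd_offdiag_cnj by (simp_all add: z_def density_def trace_2[symmetric])
  ultimately show ?thesis
    by (simp add: qform_mcs C_l1_2 flip: z_def)
qed

lemma coh_fraction_bdd_above:
  "density \<rho> \<Longrightarrow> bdd_above ((\<lambda>\<phi>. Re (qform \<phi> \<rho>)) ` max_coh)"
  by (rule bdd_aboveI[where M = 1]) (auto elim: max_coh_obtain_mcs simp: density_qform_mcs_le_1)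

lemma coh_fraction_le_1:
  assumes "density \<rho>"
  shows "coh_fraction \<rho> \<le> 1"
proof -
  have "mcs 0 0 \<in> max_coh"
    by (rule mcs_in_max_coh) auto
  then show ?thesis
    unfolding coh_fraction_def
    by (intro cSup_least) (auto elim: max_coh_obtain_mcs simp: assms density_qform_mcs_le_1)
qed

lemma coh_fraction_ge:
  assumes "density \<rho>"
  shows "1/2 + C_l1 \<rho> / 2 \<le> coh_fraction \<rho>"
proof -
  have "mcs pi (pi - Arg (\<rho>$1$2)) \<in> max_coh"
    by (rule mcs_in_max_coh) (use Arg_bounded[of "\<rho>$1$2"] in auto)
  then show ?thesis
    unfolding coh_fraction_def density_qform_mcs_aligned[OF assms, symmetric]
    by (intro cSup_upper coh_fraction_bdd_above[OF assms]) auto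
qed

lemma mcs_0_0: "mcs 0 0 \<in> max_coh" "mcs 0 0 \<in> pure_states"
  by (auto intro: mcs_in_max_coh simp: pure_states_def norm_mcs)

lemma qubit_channel_coh_fraction_le_1:
  "qubit_channel \<Lambda> \<Longrightarrow> \<psi> \<in> pure_states \<Longrightarrow> coh_fraction (\<Lambda> (proj \<psi>)) \<le> 1"
  by (simp add: pure_states_def density_proj qubit_channel_density coh_fraction_le_1)

lemma coh_fraction_le_opt_coh_fraction:
  assumes "qubit_channel \<Lambda>" "\<psi> \<in> pure_states"
  shows "coh_fraction (\<Lambda> (proj \<psi>)) \<le> opt_coh_fraction \<Lambda>"
  unfolding opt_coh_fraction_def
  by (rule cSup_upper)
    (use assms qubit_channel_coh_fraction_le_1 in \<open>auto intro: bdd_aboveI[where M = 1]\<close>)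

lemma opt_coh_fraction_le_1: "qubit_channel \<Lambda> \<Longrightarrow> opt_coh_fraction \<Lambda> \<le> 1"
  unfolding opt_coh_fraction_def
  by (rule cSup_least) (use mcs_0_0 qubit_channel_coh_fraction_le_1 in auto)

lemma decoherence_mcs_le_1:
  "\<phi> \<in> max_coh \<Longrightarrow> C_l1 (proj \<phi>) - C_l1 (\<Lambda> (proj \<phi>)) \<le> 1"
  by (auto elim!: max_coh_obtain_mcs simp: C_l1_proj_mcs C_l1_nonneg)

lemma decohering_power_ge:
  assumes "\<phi> \<in> max_coh"
  shows "1 - C_l1 (\<Lambda> (proj \<phi>)) \<le> decohering_power \<Lambda>"
proof -
  obtain a b where "\<phi> = mcs a b"
    using assms by (rule max_coh_obtain_mcs)
  then have "1 - C_l1 (\<Lambda> (proj \<phi>)) \<in> (\<lambda>\<phi>. C_l1 (proj \<phi>) - C_l1 (\<Lambda> (proj \<phi>))) ` max_coh"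
    by (intro image_eqI[OF _ assms]) (simp add: C_l1_proj_mcs)
  then show ?thesis
    unfolding decohering_power_def
    by (rule cSup_upper) (use decoherence_mcs_le_1 in \<open>auto intro: bdd_aboveI[where M = 1]\<close>)
qed

lemma decohering_power_le_1: "decohering_power \<Lambda> \<le> 1"
  unfolding decohering_power_def
  by (rule cSup_least) (use mcs_0_0 decoherence_mcs_le_1 in auto)

theorem theorem4:
  fixes \<Lambda> :: "qmat \<Rightarrow> qmat"
  assumes "qubit_channel \<Lambda>"
  shows "2 \<le> 2 * opt_coh_fraction \<Lambda> + decohering_power \<Lambda>
         \<and> 2 * opt_coh_fraction \<Lambda> + decohering_power \<Lambda> \<le> 3"
proof -
  define \<rho> where "\<rho> = \<Lambda> (proj (mcs 0 0))"
  have "density \<rho>"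
    using assms mcs_0_0 by (simp add: \<rho>_def pure_states_def qubit_channel_density density_proj)
  then have "1/2 + C_l1 \<rho> / 2 \<le> coh_fraction \<rho>"
    by (rule coh_fraction_ge)
  also have "\<dots> \<le> opt_coh_fraction \<Lambda>"
    unfolding \<rho>_def using assms mcs_0_0(2) by (rule coh_fraction_le_opt_coh_fraction)
  finally have "1/2 + C_l1 \<rho> / 2 \<le> opt_coh_fraction \<Lambda>" .
  moreover have "1 - C_l1 \<rho> \<le> decohering_power \<Lambda>"
    unfolding \<rho>_def using mcs_0_0(1) by (rule decohering_power_ge)
  moreover note opt_coh_fraction_le_1[OF assms] decohering_power_le_1[of \<Lambda>]
  ultimately show ?thesis
    by (intro conjI; linarith)
qed

end
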